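(* Let $m, n \ge 0$ be integers. If each of the $2 \times m$ and $2 \times n$ Domineering boards has outcome ${\rm 2nd}$ or $V$, then the $2 \times (m+n+1)$ board has outcome ${\rm 1st}$ or $V$ (i.e. Vera wins the $2\times(m+n+1)$ board whenever she moves first).
   Context: Domineering on an $a \times b$ board (a rectangle of $a$ rows and $b$ columns of unit cells): two players, Vera and Hepzibah, alternately place dominoes on empty cells; Vera places vertical dominoes (covering two vertically adjacent empty cells), Hepzibah places horizontal dominoes (covering two horizontally adjacent empty cells). A player who cannot move on her turn loses. The outcome class is $V$ if Vera wins with optimal play regardless of who moves first, $H$ if Hepzibah wins regardless of who moves first, ${\rm 1st}$ if the first player wins, and ${\rm 2nd}$ if the second player wins. The $2\times 0$ board is the empty board. *)

theory Defs
  imports Main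
begin

text \<open>Domineering. A position is the set of empty cells (row, column).
  Vera places vertical dominoes, Hepzibah horizontal ones.\<close>

datatype player = Vera | Hepzibah

fun other :: "player \<Rightarrow> player" where
  "other Vera = Hepzibah"
| "other Hepzibah = Vera"

type_synonym pos = "(nat \<times> nat) set"

fun move :: "player \<Rightarrow> pos \<Rightarrow> pos \<Rightarrow> bool" where
  "move Vera S S' = (\<exists>i j. (i, j) \<in> S \<and> (Suc i, j) \<in> S \<and> S' = S - {(i, j), (Suc i, j)})"
| "move Hepzibah S S' = (\<exists>i j. (i, j) \<in> S \<and> (i, Suc j) \<in> S \<and> S' = S - {(i, j), (i, Suc j)})"

text \<open>wins p q S: player p has a winning strategy in position S when player q is to move
  (a player unable to move on her turn loses).\<close>
inductive wins :: "player \<Rightarrow> player \<Rightarrow> pos \<Rightarrow> bool" where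
  win_move: "move p S S' \<Longrightarrow> wins p (other p) S' \<Longrightarrow> wins p p S"
| win_reply: "q \<noteq> p \<Longrightarrow> (\<And>S'. move q S S' \<Longrightarrow> wins p p S') \<Longrightarrow> wins p q S"

definition board :: "nat \<Rightarrow> nat \<Rightarrow> pos" where
  "board a b = {(i, j). i < a \<and> j < b}"

definition outcome_V :: "pos \<Rightarrow> bool" where
  "outcome_V S \<longleftrightarrow> wins Vera Vera S \<and> wins Vera Hepzibah S"
definition outcome_H :: "pos \<Rightarrow> bool" where
  "outcome_H S \<longleftrightarrow> wins Hepzibah Vera S \<and> wins Hepzibah Hepzibah S"
definition outcome_1st :: "pos \<Rightarrow> bool" where
  "outcome_1st S \<longleftrightarrow> wins Vera Vera S \<and> wins Hepzibah Hepzibah S"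
definition outcome_2nd :: "pos \<Rightarrow> bool" where
  "outcome_2nd S \<longleftrightarrow> wins Vera Hepzibah S \<and> wins Hepzibah Vera S"

end

theory Submission
  imports Defs
begin

text \<open>Vera opens with the vertical domino in column m. What remains is a 2 x m board and a
  2 x n board separated by the now empty column, so no domino meets both: the position is the
  disjoint sum of the two boards. A player who wins both components of a disjoint sum moving
  second wins the sum moving second, by answering each move in the component where it was made.
  Hence Vera wins the 2 x (m+n+1) board moving first, and by determinacy the outcome is 1st or V
  according to who wins when Hepzibah starts.\<close>

lemma other_other [simp]: "other (other p) = p"
  by (cases p) simp_all

lemma other_neq [simp]: "other p \<noteq> p"
  by (cases p) simp_all

lemma neq_imp_eq_other: "q \<noteq> p \<Longrightarrow> q = other p"
  by (cases p; cases q) simp_all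

lemma move_psubset: "move p S S' \<Longrightarrow> S' \<subset> S"
  by (cases p) auto

lemma move_finite_subset_card_less:
  assumes "move p S S'" "finite S"
  shows "finite S'" "S' \<subseteq> S" "card S' < card S"
  using move_psubset[OF assms(1)] assms(2) by (auto intro: finite_subset psubset_card_mono)

lemma wins_after_opponent_move: "wins p (other p) S \<Longrightarrow> move (other p) S S' \<Longrightarrow> wins p p S'"
  by (erule wins.cases) auto

lemma wins_determined: "finite S \<Longrightarrow> wins q q S \<or> wins (other q) q S"
proof (induction "card S" arbitrary: S q rule: less_induct)
  case less
  show ?case
  proof (cases "\<exists>S'. move q S S' \<and> wins q (other q) S'")
    case True
    then show ?thesis by (blast intro: win_move)
  next
    case False
    have "wins (other q) (other q) S'" if "move q S S'" for S'
      using less.hyps[of S' "other q"] move_finite_subset_card_less[OF that less.prems] False that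
      by auto
    then have "wins (other q) q S"
      by (auto intro: win_reply simp: eq_commute[of q])
    then show ?thesis ..
  qed
qed

fun domino :: "player \<Rightarrow> pos \<Rightarrow> bool" where
  "domino Vera D \<longleftrightarrow> (\<exists>i j. D = {(i, j), (Suc i, j)})"
| "domino Hepzibah D \<longleftrightarrow> (\<exists>i j. D = {(i, j), (i, Suc j)})"

lemma move_iff_domino: "move p S S' \<longleftrightarrow> (\<exists>D. domino p D \<and> D \<subseteq> S \<and> S' = S - D)"
  by (cases p) auto

definition separated :: "pos \<Rightarrow> pos \<Rightarrow> bool" where
  "separated A B \<longleftrightarrow> A \<inter> B = {} \<and> (\<forall>p D. domino p D \<longrightarrow> D \<inter> A = {} \<or> D \<inter> B = {})"

lemma separated_sym: "separated A B \<Longrightarrow> separated B A"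
  unfolding separated_def by blast

lemma separated_mono: "separated A B \<Longrightarrow> A' \<subseteq> A \<Longrightarrow> B' \<subseteq> B \<Longrightarrow> separated A' B'"
  unfolding separated_def by blast

lemma move_union_left: "move p A A' \<Longrightarrow> A \<inter> B = {} \<Longrightarrow> move p (A \<union> B) (A' \<union> B)"
  unfolding move_iff_domino by blast

lemma move_union_cases:
  assumes "move p (A \<union> B) T" "separated A B"
  obtains A' where "move p A A'" "T = A' \<union> B"
    | B' where "move p B B'" "T = A \<union> B'"
proof -
  obtain D where D: "domino p D" "D \<subseteq> A \<union> B" "T = (A \<union> B) - D"
    using assms(1) by (auto simp: move_iff_domino)
  from assms(2) D(1) have "D \<inter> B = {} \<or> D \<inter> A = {}"
    unfolding separated_def by blast
  then show thesis
  proof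
    assume "D \<inter> B = {}"
    then have "move p A (A - D)" "T = (A - D) \<union> B"
      using D by (auto simp: move_iff_domino)
    then show thesis by (rule that(1))
  next
    assume "D \<inter> A = {}"
    then have "move p B (B - D)" "T = A \<union> (B - D)"
      using D by (auto simp: move_iff_domino)
    then show thesis by (rule that(2))
  qed
qed

lemma wins_separated_union:
  assumes "finite A" "finite B" "separated A B"
    and "wins p q A" "wins p (other p) B"
  shows "wins p q (A \<union> B)"
  using assms
proof (induction "card A + card B" arbitrary: A B q rule: less_induct)
  case less
  from \<open>wins p q A\<close> show ?case
  proof cases
    case (win_move A')
    from move_finite_subset_card_less[OF win_move(2) less.prems(1)]
    have "wins p (other p) (A' \<union> B)"
      using less.hyps[of A' B "other p"] less.prems win_move(3) by (auto intro: separated_mono)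
    moreover have "move p (A \<union> B) (A' \<union> B)"
      using win_move(2) less.prems(3) by (auto intro: move_union_left simp: separated_def)
    ultimately show ?thesis
      using win_move(1) by (blast intro: wins.win_move)
  next
    case win_reply
    show ?thesis
    proof (rule wins.win_reply[OF \<open>q \<noteq> p\<close>])
      fix T
      assume "move q (A \<union> B) T"
      from this less.prems(3) show "wins p p T"
      proof (rule move_union_cases)
        fix A'
        assume A': "move q A A'" "T = A' \<union> B"
        from move_finite_subset_card_less[OF A'(1) less.prems(1)]
        show ?thesis
          using less.hyps[of A' B p] less.prems A' win_reply(2) by (auto intro: separated_mono)
      next
        fix B'
        assume B': "move q B B'" "T = A \<union> B'"
        txt \<open>The reply is made in B, after which B' plays the role of the first summand.\<close>
        note move_finite_subset_card_less[OF B'(1) less.prems(2)]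
        moreover have "wins p p B'"
          using wins_after_opponent_move less.prems(5) B'(1) neq_imp_eq_other[OF \<open>q \<noteq> p\<close>]
          by blast
        moreover have "wins p (other p) A"
          using less.prems(4) neq_imp_eq_other[OF \<open>q \<noteq> p\<close>] by simp
        ultimately have "wins p p (B' \<union> A)"
          using less.hyps[of B' A p] less.prems(1,3) by (auto intro: separated_sym separated_mono)
        then show ?thesis
          using B'(2) by (simp add: Un_commute)
      qed
    qed
  qed
qed

definition shift :: "nat \<Rightarrow> pos \<Rightarrow> pos" where
  "shift k S = (\<lambda>(i, j). (i, j + k)) ` S"

lemma mem_shift_iff: "(i, j) \<in> shift k S \<longleftrightarrow> k \<le> j \<and> (i, j - k) \<in> S"
  unfolding shift_def by (auto simp: image_iff intro!: bexI[of _ "(i, j - k)"])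

lemma shift_diff: "shift k (S - D) = shift k S - shift k D"
  unfolding shift_def by (rule image_set_diff) (auto simp: inj_def)

lemma finite_shift: "finite S \<Longrightarrow> finite (shift k S)"
  unfolding shift_def by simp

lemma shift_insert: "shift k (insert (i, j) S) = insert (i, j + k) (shift k S)"
  and shift_empty: "shift k {} = {}"
  unfolding shift_def by simp_all

lemma move_shift:
  assumes "move p S S'"
  shows "move p (shift k S) (shift k S')"
proof (cases p)
  case Vera
  with assms obtain i j where "(i, j) \<in> S" "(Suc i, j) \<in> S" "S' = S - {(i, j), (Suc i, j)}"
    by auto
  then have "(i, j + k) \<in> shift k S" "(Suc i, j + k) \<in> shift k S"
    "shift k S' = shift k S - {(i, j + k), (Suc i, j + k)}"
    by (simp_all add: mem_shift_iff shift_diff shift_insert shift_empty)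
  with Vera show ?thesis by auto
next
  case Hepzibah
  with assms obtain i j where "(i, j) \<in> S" "(i, Suc j) \<in> S" "S' = S - {(i, j), (i, Suc j)}"
    by auto
  then have "(i, j + k) \<in> shift k S" "(i, Suc (j + k)) \<in> shift k S"
    "shift k S' = shift k S - {(i, j + k), (i, Suc (j + k))}"
    by (simp_all add: mem_shift_iff shift_diff shift_insert shift_empty)
  with Hepzibah show ?thesis by auto
qed

lemma move_from_shift:
  assumes "move p (shift k S) T"
  obtains S' where "move p S S'" "T = shift k S'"
proof (cases p)
  case Vera
  with assms obtain i j where "(i, j) \<in> shift k S" "(Suc i, j) \<in> shift k S"
    "T = shift k S - {(i, j), (Suc i, j)}"
    by auto
  then have "move p S (S - {(i, j - k), (Suc i, j - k)})"
    "T = shift k (S - {(i, j - k), (Suc i, j - k)})"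
    using Vera by (auto simp: mem_shift_iff shift_diff shift_insert shift_empty)
  then show thesis by (rule that)
next
  case Hepzibah
  with assms obtain i j where "(i, j) \<in> shift k S" "(i, Suc j) \<in> shift k S"
    "T = shift k S - {(i, j), (i, Suc j)}"
    by auto
  then have "move p S (S - {(i, j - k), (i, Suc (j - k))})"
    "T = shift k (S - {(i, j - k), (i, Suc (j - k))})"
    using Hepzibah by (auto simp: mem_shift_iff shift_diff shift_insert shift_empty Suc_diff_le)
  then show thesis by (rule that)
qed

lemma wins_shift: "wins p q S \<Longrightarrow> wins p q (shift k S)"
proof (induction rule: wins.induct)
  case (win_move p S S')
  then show ?case
    by (blast intro: wins.win_move move_shift)
next
  case (win_reply q p S)
  show ?case
  proof (rule wins.win_reply[OF win_reply.hyps(1)])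
    fix T
    assume "move q (shift k S) T"
    then obtain S' where "move q S S'" "T = shift k S'"
      by (rule move_from_shift)
    then show "wins p p T"
      using win_reply.IH by blast
  qed
qed

lemma finite_board: "finite (board a b)"
  by (rule finite_subset[of _ "{..<a} \<times> {..<b}"]) (auto simp: board_def)

lemma board_remove_column:
  "board 2 (m + n + 1) - {(0, m), (1, m)} = board 2 m \<union> shift (Suc m) (board 2 n)"
proof (rule set_eqI)
  fix x :: "nat \<times> nat"
  show "x \<in> board 2 (m + n + 1) - {(0, m), (1, m)} \<longleftrightarrow> x \<in> board 2 m \<union> shift (Suc m) (board 2 n)"
    by (cases x) (auto simp: board_def mem_shift_iff)
qed

lemma separated_board_shift: "separated (board a m) (shift (Suc m) (board b n))"
  unfolding separated_def
proof (intro conjI allI impI)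
  show "board a m \<inter> shift (Suc m) (board b n) = {}"
    by (auto simp: board_def mem_shift_iff)
  fix p D
  assume "domino p D"
  then show "D \<inter> board a m = {} \<or> D \<inter> shift (Suc m) (board b n) = {}"
    by (cases p) (auto simp: board_def mem_shift_iff)
qed

lemma wins_second_if_outcome_2nd_or_V:
  "outcome_2nd S \<or> outcome_V S \<Longrightarrow> wins Vera Hepzibah S"
  unfolding outcome_2nd_def outcome_V_def by blast

lemma outcome_1st_or_V_if_wins_first:
  assumes "finite S" "wins Vera Vera S"
  shows "outcome_1st S \<or> outcome_V S"
  using assms wins_determined[of S Hepzibah] unfolding outcome_1st_def outcome_V_def by auto

theorem mainTheorem9:
  fixes m n :: nat
  assumes "outcome_2nd (board 2 m) \<or> outcome_V (board 2 m)"
      and "outcome_2nd (board 2 n) \<or> outcome_V (board 2 n)"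
  shows "outcome_1st (board 2 (m + n + 1)) \<or> outcome_V (board 2 (m + n + 1))"
proof -
  let ?S = "board 2 (m + n + 1)"
  have "wins Vera Hepzibah (board 2 m)" "wins Vera Hepzibah (shift (Suc m) (board 2 n))"
    using assms by (auto intro: wins_second_if_outcome_2nd_or_V wins_shift)
  then have "wins Vera Hepzibah (?S - {(0, m), (1, m)})"
    unfolding board_remove_column
    by (intro wins_separated_union) (simp_all add: finite_board finite_shift separated_board_shift)
  moreover have "move Vera ?S (?S - {(0, m), (1, m)})"
    unfolding move.simps by (intro exI[of _ 0] exI[of _ m]) (auto simp: board_def)
  ultimately have "wins Vera Vera ?S"
    using win_move[of Vera] by simp
  then show ?thesis
    by (rule outcome_1st_or_V_if_wins_first[OF finite_board])
qed

end
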